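(* Let $G_i=(V,E)$ be a fixed graph with a distinguished vertex $v_i$, let $k$ be an integer and $c\in[k]$ such that some proper $k$-colouring of $G_i$ assigns $c$ to $v_i$. Let $M=x_1,x_2,\dots,x_l$ be a path in $G_i$ with $x_1=v_i$, and let $E$ be the event "$M$ is a path of disagreement" (all of $x_1,\dots,x_l$ are disagreeing). Then $\mathcal{L}_{G_i,k}[E]\le\mathcal{P}_{G_i,k}[E]$.
   Context: $[k]=\{1,\dots,k\}$. The distribution $\mathcal{L}_{G_i,k}$: choose a proper $k$-colouring $\sigma$ uniformly at random among those with $\sigma_{v_i}=c$; choose $q$ uniformly at random from $[k]\setminus\{c\}$; form the disagreement graph $Q_{c,q}$, the subgraph of $G_i$ induced by all vertices reachable from $v_i$ by a path in $G_i$ whose vertices all have colour in $\{c,q\}$; a vertex is "disagreeing" if it belongs to $Q_{c,q}$ and "non-disagreeing" otherwise. The product measure $\mathcal{P}_{G_i,k}$: independently, each vertex $w$ is disagreeing with probability $q_w=\frac{1}{k-\deg_i(w)}$ (with $q_w=1$ if $k\le\deg_i(w)$), where $\deg_i(w)$ is the degree of $w$ in $G_i$, except that $v_i$ is disagreeing with probability $1$. *)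

theory Defs
  imports "HOL-Probability.Probability"
begin

definition graph :: "'a set \<Rightarrow> ('a \<Rightarrow> 'a \<Rightarrow> bool) \<Rightarrow> bool" where
  "graph V E \<longleftrightarrow> finite V \<and> (\<forall>x y. E x y \<longrightarrow> x \<in> V \<and> y \<in> V \<and> x \<noteq> y \<and> E y x)"

definition deg :: "'a set \<Rightarrow> ('a \<Rightarrow> 'a \<Rightarrow> bool) \<Rightarrow> 'a \<Rightarrow> nat" where
  "deg V E w = card {u \<in> V. E w u}"

definition proper_colourings :: "'a set \<Rightarrow> ('a \<Rightarrow> 'a \<Rightarrow> bool) \<Rightarrow> nat \<Rightarrow> ('a \<Rightarrow> nat) set" where
  "proper_colourings V E k =
     {\<sigma> \<in> V \<rightarrow>\<^sub>E {1..k}. \<forall>x\<in>V. \<forall>y\<in>V. E x y \<longrightarrow> \<sigma> x \<noteq> \<sigma> y}"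

definition is_path :: "'a set \<Rightarrow> ('a \<Rightarrow> 'a \<Rightarrow> bool) \<Rightarrow> 'a list \<Rightarrow> bool" where
  "is_path V E M \<longleftrightarrow> M \<noteq> [] \<and> distinct M \<and> set M \<subseteq> V \<and>
     (\<forall>j. Suc j < length M \<longrightarrow> E (M ! j) (M ! Suc j))"

(* the vertex set of the disagreement graph Q_{c,q}: vertices reachable from v by a path
   all of whose vertices have colour in {c,q} *)
definition disagreement_set ::
  "'a set \<Rightarrow> ('a \<Rightarrow> 'a \<Rightarrow> bool) \<Rightarrow> 'a \<Rightarrow> ('a \<Rightarrow> nat) \<Rightarrow> nat \<Rightarrow> nat \<Rightarrow> 'a set" where
  "disagreement_set V E v \<sigma> c q =
     {w \<in> V. \<sigma> v \<in> {c, q} \<and>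
        (\<lambda>x y. x \<in> V \<and> y \<in> V \<and> E x y \<and> \<sigma> x \<in> {c, q} \<and> \<sigma> y \<in> {c, q})\<^sup>*\<^sup>* v w}"

definition L_dist :: "'a set \<Rightarrow> ('a \<Rightarrow> 'a \<Rightarrow> bool) \<Rightarrow> 'a \<Rightarrow> nat \<Rightarrow> nat \<Rightarrow> (('a \<Rightarrow> nat) \<times> nat) pmf" where
  "L_dist V E v k c =
     pmf_of_set ({\<sigma> \<in> proper_colourings V E k. \<sigma> v = c} \<times> ({1..k} - {c}))"

definition L_disagreeing :: "'a set \<Rightarrow> ('a \<Rightarrow> 'a \<Rightarrow> bool) \<Rightarrow> 'a \<Rightarrow> nat \<Rightarrow> nat \<Rightarrow> ('a \<Rightarrow> bool) pmf" where
  "L_disagreeing V E v k c =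
     map_pmf (\<lambda>(\<sigma>, q) w. w \<in> disagreement_set V E v \<sigma> c q) (L_dist V E v k c)"

definition q_prob :: "'a set \<Rightarrow> ('a \<Rightarrow> 'a \<Rightarrow> bool) \<Rightarrow> nat \<Rightarrow> 'a \<Rightarrow> real" where
  "q_prob V E k w = (if k \<le> deg V E w then 1 else 1 / (real k - real (deg V E w)))"

definition P_disagreeing :: "'a set \<Rightarrow> ('a \<Rightarrow> 'a \<Rightarrow> bool) \<Rightarrow> 'a \<Rightarrow> nat \<Rightarrow> ('a \<Rightarrow> bool) pmf" where
  "P_disagreeing V E v k =
     Pi_pmf V False (\<lambda>w. if w = v then return_pmf True else bernoulli_pmf (q_prob V E k w))"

definition path_disagreement_event :: "'a list \<Rightarrow> ('a \<Rightarrow> bool) set" where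
  "path_disagreement_event M = {f. \<forall>x\<in>set M. f x}"

end

theory Submission
  imports Defs
begin

text \<open>Under \<open>\<L>\<close>, if \<open>M = x\<^sub>1 \<dots> x\<^sub>l\<close> is a path of disagreement then the colours along
  \<open>M\<close> alternate \<open>c, q, c, \<dots>\<close>, because every disagreeing vertex has colour in \<open>{c, q}\<close> and
  consecutive vertices differ. So it suffices to bound the proportion of colourings with
  prescribed colours on \<open>x\<^sub>2, \<dots>, x\<^sub>l\<close>. Prescribing the colour of one more vertex \<open>x\<close>
  costs a factor \<open>1/(k - deg x)\<close>: recolouring \<open>x\<close> with any of the at least \<open>k - deg x\<close>
  colours unused on its neighbourhood injects \<open>k - deg x\<close> copies of every such colouring
  into the colourings without that prescription. The resulting product is exactly the
  probability of the event under the product measure \<open>\<P>\<close>.\<close>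

lemma q_prob_nonneg: "0 \<le> q_prob V E k x"
  by (simp add: q_prob_def)

lemma q_prob_le_1: "q_prob V E k x \<le> 1"
  by (auto simp: q_prob_def field_simps)

lemma finite_proper_colourings:
  assumes "finite V"
  shows "finite (proper_colourings V E k)"
  using finite_PiE[OF assms, of "\<lambda>_. {1..k}"]
  by (rule finite_subset[rotated]) (auto simp: proper_colourings_def)

lemma proper_colourings_fun_upd:
  assumes g: "graph V E" and \<sigma>: "\<sigma> \<in> proper_colourings V E k"
    and "x \<in> V" "b \<in> {1..k}" and free: "\<And>u. E x u \<Longrightarrow> \<sigma> u \<noteq> b"
  shows "\<sigma>(x := b) \<in> proper_colourings V E k"
proof -
  have "\<sigma>(x := b) \<in> V \<rightarrow>\<^sub>E {1..k}"
    using \<sigma> assms(3,4) by (auto simp: proper_colourings_def PiE_def Pi_def extensional_def)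
  moreover have "(\<sigma>(x := b)) y \<noteq> (\<sigma>(x := b)) z" if "y \<in> V" "z \<in> V" "E y z" for y z
    using that g \<sigma> free by (auto simp: graph_def proper_colourings_def)
  ultimately show ?thesis
    by (simp add: proper_colourings_def)
qed

lemma card_free_colours_ge:
  assumes "finite V"
  shows "k - deg V E x \<le> card ({1..k} - \<sigma> ` {u \<in> V. E x u})"
proof -
  have "card (\<sigma> ` {u \<in> V. E x u}) \<le> deg V E x"
    unfolding deg_def using assms by (intro card_image_le) auto
  moreover have "card {1..k} - card (\<sigma> ` {u \<in> V. E x u}) \<le> card ({1..k} - \<sigma> ` {u \<in> V. E x u})"
    using assms by (intro diff_card_le_card_Diff) auto
  ultimately show ?thesis
    by simp
qed

lemma fun_upd_eq_fun_upd_iff: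
  assumes "f x = g x"
  shows "f(x := a) = g(x := b) \<longleftrightarrow> f = g \<and> a = b"
  using assms by (metis fun_upd_same fun_upd_triv fun_upd_upd)

lemma card_fixed_colour_mult_le:
  assumes g: "graph V E" and x: "x \<in> V" and P: "\<And>\<sigma> b. P \<sigma> \<Longrightarrow> P (\<sigma>(x := b))"
  shows "card {\<sigma> \<in> proper_colourings V E k. P \<sigma> \<and> \<sigma> x = b} * (k - deg V E x)
           \<le> card {\<sigma> \<in> proper_colourings V E k. P \<sigma>}"
proof -
  define A where "A = {\<sigma> \<in> proper_colourings V E k. P \<sigma>}"
  define B where "B = {\<sigma> \<in> A. \<sigma> x = b}"
  define free where "free \<sigma> = {1..k} - \<sigma> ` {u \<in> V. E x u}" for \<sigma> :: "'a \<Rightarrow> nat"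
  have finV: "finite V"
    using g by (simp add: graph_def)
  have finA: "finite A"
    using finite_proper_colourings[OF finV] by (simp add: A_def)
  have finB: "finite B"
    using finA by (simp add: B_def)
  have "inj_on (\<lambda>(\<sigma>, b'). \<sigma>(x := b')) (Sigma B free)"
  proof (rule inj_onI)
    fix p p' assume "p \<in> Sigma B free" "p' \<in> Sigma B free"
      and "(\<lambda>(\<sigma>, b'). \<sigma>(x := b')) p = (\<lambda>(\<sigma>, b'). \<sigma>(x := b')) p'"
    then show "p = p'"
      by (cases p, cases p') (simp add: B_def fun_upd_eq_fun_upd_iff)
  qed
  moreover have "(\<lambda>(\<sigma>, b'). \<sigma>(x := b')) ` Sigma B free \<subseteq> A"
  proof
    fix \<tau> assume "\<tau> \<in> (\<lambda>(\<sigma>, b'). \<sigma>(x := b')) ` Sigma B free"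
    then obtain \<sigma> b' where "\<sigma> \<in> B" "b' \<in> free \<sigma>" "\<tau> = \<sigma>(x := b')"
      by auto
    moreover have "\<sigma> u \<noteq> b'" if "E x u" for u
      using \<open>b' \<in> free \<sigma>\<close> that g by (auto simp: free_def graph_def)
    ultimately show "\<tau> \<in> A"
      using proper_colourings_fun_upd[OF g _ x, of \<sigma> k b'] P by (auto simp: A_def B_def free_def)
  qed
  ultimately have "card (Sigma B free) \<le> card A"
    using card_inj_on_le finA by blast
  moreover have "card B * (k - deg V E x) \<le> card (Sigma B free)"
  proof -
    have "card B * (k - deg V E x) = (\<Sum>\<sigma>\<in>B. k - deg V E x)"
      by simp
    also have "\<dots> \<le> (\<Sum>\<sigma>\<in>B. card (free \<sigma>))"
      unfolding free_def by (intro sum_mono card_free_colours_ge finV)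
    also have "\<dots> = card (Sigma B free)"
      using finB by (simp add: card_SigmaI free_def)
    finally show ?thesis .
  qed
  ultimately show ?thesis
    by (simp add: A_def B_def)
qed

lemma card_fixed_colour_le:
  assumes g: "graph V E" and x: "x \<in> V" and P: "\<And>\<sigma> b. P \<sigma> \<Longrightarrow> P (\<sigma>(x := b))"
  shows "real (card {\<sigma> \<in> proper_colourings V E k. P \<sigma> \<and> \<sigma> x = b})
           \<le> q_prob V E k x * real (card {\<sigma> \<in> proper_colourings V E k. P \<sigma>})"
proof -
  let ?A = "{\<sigma> \<in> proper_colourings V E k. P \<sigma>}"
  let ?B = "{\<sigma> \<in> proper_colourings V E k. P \<sigma> \<and> \<sigma> x = b}"
  show ?thesis
  proof (cases "k \<le> deg V E x")
    case True
    have "finite (proper_colourings V E k)"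
      using g finite_proper_colourings by (auto simp: graph_def)
    then have "card ?B \<le> card ?A"
      by (intro card_mono) auto
    with True show ?thesis
      by (simp add: q_prob_def)
  next
    case False
    have "real (card ?B * (k - deg V E x)) \<le> real (card ?A)"
      using card_fixed_colour_mult_le[of V E x P k b, OF assms] by (simp only: of_nat_le_iff)
    then have "real (card ?B) * (real k - real (deg V E x)) \<le> real (card ?A)"
      using False by (simp add: of_nat_diff)
    with False show ?thesis
      by (simp add: q_prob_def field_simps)
  qed
qed

lemma card_prescribed_colours_le:
  assumes g: "graph V E" and "finite X" "X \<subseteq> V" "X \<inter> Y = {}"
  shows "real (card {\<sigma> \<in> proper_colourings V E k. \<forall>y\<in>Y \<union> X. \<sigma> y = f y})
           \<le> (\<Prod>x\<in>X. q_prob V E k x) * real (card {\<sigma> \<in> proper_colourings V E k. \<forall>y\<in>Y. \<sigma> y = f y})"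
  using assms(2-4)
proof (induction X rule: finite_induct)
  case empty
  then show ?case
    by simp
next
  case (insert x X)
  let ?C = "\<lambda>Z. real (card {\<sigma> \<in> proper_colourings V E k. \<forall>y\<in>Z. \<sigma> y = f y})"
  have "x \<in> V"
    using insert.prems by simp
  moreover have "\<forall>y\<in>Y \<union> X. (\<sigma>(x := b)) y = f y" if "\<forall>y\<in>Y \<union> X. \<sigma> y = f y" for \<sigma> b
    using that insert.hyps(2) insert.prems(2) by auto
  ultimately have "real (card {\<sigma> \<in> proper_colourings V E k. (\<forall>y\<in>Y \<union> X. \<sigma> y = f y) \<and> \<sigma> x = f x})
                     \<le> q_prob V E k x * ?C (Y \<union> X)"
    by (rule card_fixed_colour_le[OF g])
  moreover have "{\<sigma> \<in> proper_colourings V E k. \<forall>y\<in>Y \<union> insert x X. \<sigma> y = f y}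
                   = {\<sigma> \<in> proper_colourings V E k. (\<forall>y\<in>Y \<union> X. \<sigma> y = f y) \<and> \<sigma> x = f x}"
    by auto
  ultimately have "?C (Y \<union> insert x X) \<le> q_prob V E k x * ?C (Y \<union> X)"
    by simp
  also have "\<dots> \<le> q_prob V E k x * ((\<Prod>x\<in>X. q_prob V E k x) * ?C Y)"
    using insert by (intro mult_left_mono q_prob_nonneg) auto
  finally show ?case
    using insert.hyps by (simp add: mult.assoc)
qed

lemma disagreement_set_colour:
  assumes "w \<in> disagreement_set V E v \<sigma> c q"
  shows "\<sigma> w \<in> {c, q}"
proof -
  have v: "\<sigma> v \<in> {c, q}"
    and r: "(\<lambda>x y. x \<in> V \<and> y \<in> V \<and> E x y \<and> \<sigma> x \<in> {c, q} \<and> \<sigma> y \<in> {c, q})\<^sup>*\<^sup>* v w"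
    using assms by (simp_all add: disagreement_set_def)
  from r show ?thesis
  proof (cases rule: rtranclp.cases)
    case rtrancl_refl
    with v show ?thesis
      by simp
  qed simp
qed

lemma path_colours_alternate:
  assumes M: "is_path V E M" and \<sigma>: "\<sigma> \<in> proper_colourings V E k"
    and "\<sigma> (hd M) = c" "q \<noteq> c" and two: "\<forall>x\<in>set M. \<sigma> x \<in> {c, q}"
  shows "i < length M \<Longrightarrow> \<sigma> (M ! i) = (if even i then c else q)"
proof (induction i)
  case 0
  then show ?case
    using assms(3) by (simp add: hd_conv_nth)
next
  case (Suc i)
  have "E (M ! i) (M ! Suc i)" "set M \<subseteq> V"
    using M Suc.prems by (auto simp: is_path_def)
  then have "\<sigma> (M ! i) \<noteq> \<sigma> (M ! Suc i)"
    using \<sigma> Suc.prems by (simp add: proper_colourings_def subset_iff)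
  moreover have "\<sigma> (M ! Suc i) \<in> {c, q}"
    using two Suc.prems by simp
  ultimately show ?case
    using Suc assms(4) by auto
qed

definition alternating_colour :: "'a list \<Rightarrow> nat \<Rightarrow> nat \<Rightarrow> 'a \<Rightarrow> nat" where
  "alternating_colour M c q w = (if \<exists>i<length M. M ! i = w \<and> odd i then q else c)"

lemma alternating_colour_nth:
  assumes "distinct M" "i < length M"
  shows "alternating_colour M c q (M ! i) = (if even i then c else q)"
  using assms by (auto simp: alternating_colour_def nth_eq_iff_index_eq)

lemma alternating_colour_hd:
  assumes "distinct M" "M \<noteq> []"
  shows "alternating_colour M c q (hd M) = c"
  using alternating_colour_nth[OF assms(1), of 0] assms by (simp add: hd_conv_nth)

lemma disagreeing_path_colours:
  assumes M: "is_path V E M" "hd M = v" and \<sigma>: "\<sigma> \<in> proper_colourings V E k" "\<sigma> v = c"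
    and "q \<noteq> c" and dis: "\<forall>w\<in>set M. w \<in> disagreement_set V E v \<sigma> c q"
    and "w \<in> set M"
  shows "\<sigma> w = alternating_colour M c q w"
proof -
  obtain i where i: "i < length M" "w = M ! i"
    using \<open>w \<in> set M\<close> by (auto simp: in_set_conv_nth)
  have "\<forall>x\<in>set M. \<sigma> x \<in> {c, q}"
    using dis disagreement_set_colour by metis
  then have "\<sigma> (M ! i) = (if even i then c else q)"
    using M(2) \<sigma>(2) by (intro path_colours_alternate[OF M(1) \<sigma>(1) _ \<open>q \<noteq> c\<close> _ i(1)]) simp_all
  also have "\<dots> = alternating_colour M c q (M ! i)"
    using M(1) i(1) by (simp add: alternating_colour_nth is_path_def)
  finally show ?thesis
    using i(2) by simp
qed

lemma card_colourings_fixed_on_path_le: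
  assumes g: "graph V E" and M: "is_path V E M" "hd M = v"
  shows "real (card {\<sigma> \<in> proper_colourings V E k. \<forall>w\<in>set M. \<sigma> w = f w})
           \<le> (\<Prod>x\<in>set M - {v}. q_prob V E k x) * real (card {\<sigma> \<in> proper_colourings V E k. \<sigma> v = f v})"
proof -
  have "v \<in> set M" "set M \<subseteq> V"
    using M by (auto simp: is_path_def)
  then have M_split: "{v} \<union> (set M - {v}) = set M"
    by blast
  have v_only: "{\<sigma> \<in> proper_colourings V E k. \<forall>w\<in>{v}. \<sigma> w = f w} = {\<sigma> \<in> proper_colourings V E k. \<sigma> v = f v}"
    by simp
  have "real (card {\<sigma> \<in> proper_colourings V E k. \<forall>w\<in>{v} \<union> (set M - {v}). \<sigma> w = f w})
          \<le> (\<Prod>x\<in>set M - {v}. q_prob V E k x) * real (card {\<sigma> \<in> proper_colourings V E k. \<forall>w\<in>{v}. \<sigma> w = f w})"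
    using \<open>set M \<subseteq> V\<close> by (intro card_prescribed_colours_le[OF g]) auto
  then show ?thesis
    unfolding M_split v_only .
qed

lemma card_disagreeing_pairs_le:
  fixes k c :: nat
  assumes g: "graph V E" and M: "is_path V E M" "hd M = v"
  defines "S \<equiv> {\<sigma> \<in> proper_colourings V E k. \<sigma> v = c}" and "Q \<equiv> {1..k} - {c}"
  shows "real (card {p \<in> S \<times> Q. \<forall>w\<in>set M. w \<in> disagreement_set V E v (fst p) c (snd p)})
           \<le> (\<Prod>x\<in>set M - {v}. q_prob V E k x) * real (card (S \<times> Q))"
proof -
  define event where "event = {p \<in> S \<times> Q. \<forall>w\<in>set M. w \<in> disagreement_set V E v (fst p) c (snd p)}"
  define C where "C q = {\<sigma> \<in> proper_colourings V E k. \<forall>w\<in>set M. \<sigma> w = alternating_colour M c q w}" for q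
  define \<pi> where "\<pi> = (\<Prod>x\<in>set M - {v}. q_prob V E k x)"
  have finP: "finite (proper_colourings V E k)"
    using g finite_proper_colourings by (auto simp: graph_def)
  have "(\<sigma>, q) \<in> (\<Union>q\<in>Q. C q \<times> {q})" if "(\<sigma>, q) \<in> event" for \<sigma> q
  proof -
    have "\<sigma> \<in> proper_colourings V E k" "\<sigma> v = c" "q \<in> Q"
      and "\<forall>w\<in>set M. w \<in> disagreement_set V E v \<sigma> c q"
      using that by (simp_all add: event_def S_def)
    then have "\<sigma> \<in> C q"
      using disagreeing_path_colours[OF M] by (simp add: C_def Q_def)
    with \<open>q \<in> Q\<close> show ?thesis
      by blast
  qed
  then have "event \<subseteq> (\<Union>q\<in>Q. C q \<times> {q})"
    by (rule subrelI)
  moreover have "finite (\<Union>q\<in>Q. C q \<times> {q})"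
    using finP by (auto simp: C_def Q_def)
  ultimately have "card event \<le> card (\<Union>q\<in>Q. C q \<times> {q})"
    by (rule card_mono[rotated])
  also have "\<dots> \<le> (\<Sum>q\<in>Q. card (C q \<times> {q}))"
    by (rule card_UN_le) (simp add: Q_def)
  finally have "real (card event) \<le> (\<Sum>q\<in>Q. real (card (C q)))"
    by (simp add: card_cartesian_product flip: of_nat_sum)
  also have "\<dots> \<le> (\<Sum>q\<in>Q. \<pi> * real (card S))"
  proof (rule sum_mono)
    fix q
    have S_eq: "{\<sigma> \<in> proper_colourings V E k. \<sigma> v = alternating_colour M c q v} = S"
      using M alternating_colour_hd[of M c q] by (simp add: S_def is_path_def)
    show "real (card (C q)) \<le> \<pi> * real (card S)"
      using card_colourings_fixed_on_path_le[OF g M, of k "alternating_colour M c q"]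
      unfolding C_def \<pi>_def S_eq .
  qed
  also have "\<dots> = \<pi> * real (card (S \<times> Q))"
    by (simp add: card_cartesian_product)
  finally show ?thesis
    by (simp add: event_def \<pi>_def)
qed

lemma prob_L_path_disagreement_le:
  assumes g: "graph V E" and "2 \<le> k" "c \<in> {1..k}"
    and col: "\<exists>\<sigma>\<in>proper_colourings V E k. \<sigma> v = c"
    and M: "is_path V E M" "hd M = v"
  shows "measure_pmf.prob (L_disagreeing V E v k c) (path_disagreement_event M)
           \<le> (\<Prod>x\<in>set M - {v}. q_prob V E k x)"
proof -
  define S where "S = {\<sigma> \<in> proper_colourings V E k. \<sigma> v = c}"
  define Q where "Q = {1..k} - {c}"
  have "S \<noteq> {}"
    using col by (auto simp: S_def)
  moreover have "(if c = 1 then 2 else 1) \<in> Q"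
    using assms(2,3) by (auto simp: Q_def)
  moreover have "finite (proper_colourings V E k)"
    using g finite_proper_colourings by (auto simp: graph_def)
  ultimately have T: "finite (S \<times> Q)" "card (S \<times> Q) > 0"
    by (auto simp: S_def Q_def card_gt_0_iff)
  have "measure_pmf.prob (L_disagreeing V E v k c) (path_disagreement_event M)
          = real (card {p \<in> S \<times> Q. \<forall>w\<in>set M. w \<in> disagreement_set V E v (fst p) c (snd p)})
              / real (card (S \<times> Q))"
    unfolding L_disagreeing_def L_dist_def measure_map_pmf S_def[symmetric] Q_def[symmetric]
    using T by (simp add: measure_pmf_of_set card_gt_0_iff path_disagreement_event_def Int_def case_prod_beta)
  then show ?thesis
    using card_disagreeing_pairs_le[OF g M, of k c] T by (simp add: S_def Q_def divide_le_eq)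
qed

lemma prob_P_all_disagreeing:
  assumes "finite V" "X \<subseteq> V"
  shows "measure_pmf.prob (P_disagreeing V E v k) {f. \<forall>x\<in>X. f x} = (\<Prod>x\<in>X - {v}. q_prob V E k x)"
proof -
  define p where "p w = (if w = v then return_pmf True else bernoulli_pmf (q_prob V E k w))" for w
  define B where "B x = (if x \<in> X then {True} else UNIV)" for x
  have "{f. \<forall>x\<in>X. f x} = Pi V B"
    using assms(2) by (auto simp: B_def Pi_def)
  then have "measure_pmf.prob (P_disagreeing V E v k) {f. \<forall>x\<in>X. f x} = (\<Prod>x\<in>V. measure_pmf.prob (p x) (B x))"
    unfolding P_disagreeing_def p_def[symmetric] using measure_Pi_pmf_Pi[OF assms(1)] by simp
  also have "\<dots> = (\<Prod>x\<in>X. measure_pmf.prob (p x) (B x))"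
    using assms by (intro prod.mono_neutral_right) (auto simp: B_def)
  also have "\<dots> = (\<Prod>x\<in>X. if x = v then 1 else q_prob V E k x)"
    by (intro prod.cong refl) (auto simp: B_def p_def measure_pmf_single q_prob_nonneg q_prob_le_1)
  also have "\<dots> = (\<Prod>x\<in>X - {v}. q_prob V E k x)"
    using assms by (subst prod.mono_neutral_left[of X "X - {v}", symmetric])
      (auto intro!: prod.cong dest: finite_subset)
  finally show ?thesis .
qed

theorem lemma6:
  fixes V :: "'a set" and E :: "'a \<Rightarrow> 'a \<Rightarrow> bool" and v :: 'a
    and k c :: nat and M :: "'a list"
  assumes "graph V E" and "v \<in> V"
    and "2 \<le> k" and "c \<in> {1..k}"
    and "\<exists>\<sigma>\<in>proper_colourings V E k. \<sigma> v = c"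
    and "is_path V E M" and "hd M = v"
  shows "measure_pmf.prob (L_disagreeing V E v k c) (path_disagreement_event M)
           \<le> measure_pmf.prob (P_disagreeing V E v k) (path_disagreement_event M)"
proof -
  have "measure_pmf.prob (L_disagreeing V E v k c) (path_disagreement_event M)
          \<le> (\<Prod>x\<in>set M - {v}. q_prob V E k x)"
    using assms(1,3-7) by (rule prob_L_path_disagreement_le)
  also have "\<dots> = measure_pmf.prob (P_disagreeing V E v k) (path_disagreement_event M)"
    using assms(1,6) prob_P_all_disagreeing[of V "set M" E v k]
    by (simp add: graph_def is_path_def path_disagreement_event_def)
  finally show ?thesis .
qed

end
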